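(* Let $\mathbb{H}$ be the real quaternion algebra and $R=\mathbb{H}[t_1,\ldots,t_n]$ the ring of polynomials in $n$ central commuting variables over $\mathbb{H}$. Let $M$ be a two-sided ideal of $R$ which is maximal as a left ideal. Then there exist $a_1,\ldots,a_n\in\mathbb{R}$ such that $t_1-a_1,\ldots,t_n-a_n$ generate $M$. *)

theory Defs
  imports Complex_Main "HOL-Library.Poly_Mapping"
begin

datatype quat = Quat (Re: real) (Im1: real) (Im2: real) (Im3: real)

lemma quat_eqI: "Re x = Re y \<Longrightarrow> Im1 x = Im1 y \<Longrightarrow> Im2 x = Im2 y \<Longrightarrow> Im3 x = Im3 y \<Longrightarrow> x = y"
  by (cases x; cases y) simp

instantiation quat :: ring_1
begin
definition "0 = Quat 0 0 0 0"
definition "1 = Quat 1 0 0 0"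
definition "x + y = Quat (Re x + Re y) (Im1 x + Im1 y) (Im2 x + Im2 y) (Im3 x + Im3 y)"
definition "x - y = Quat (Re x - Re y) (Im1 x - Im1 y) (Im2 x - Im2 y) (Im3 x - Im3 y)"
definition "- x = Quat (- Re x) (- Im1 x) (- Im2 x) (- Im3 x)"
definition "x * y = Quat
   (Re x * Re y - Im1 x * Im1 y - Im2 x * Im2 y - Im3 x * Im3 y)
   (Re x * Im1 y + Im1 x * Re y + Im2 x * Im3 y - Im3 x * Im2 y)
   (Re x * Im2 y - Im1 x * Im3 y + Im2 x * Re y + Im3 x * Im1 y)
   (Re x * Im3 y + Im1 x * Im2 y - Im2 x * Im1 y + Im3 x * Re y)"
instance
  by standard (auto intro!: quat_eqI simp: zero_quat_def one_quat_def plus_quat_def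
      minus_quat_def uminus_quat_def times_quat_def algebra_simps)
end

definition quat_of_real :: "real \<Rightarrow> quat" where
  "quat_of_real r = Quat r 0 0 0"

text \<open>R = H[t_i | i :: 'n]: finitely supported functions from monomials
  (finitely supported exponent vectors) to quaternion coefficients, with the
  convolution product from Poly_Mapping; the variables commute with each other
  and with the coefficients.\<close>

type_synonym 'n qpoly = "('n \<Rightarrow>\<^sub>0 nat) \<Rightarrow>\<^sub>0 quat"

definition qvar :: "'n \<Rightarrow> 'n qpoly" where
  "qvar i = Poly_Mapping.single (Poly_Mapping.single i 1) 1"

definition qconst :: "quat \<Rightarrow> 'n qpoly" where
  "qconst c = Poly_Mapping.single 0 c"

definition left_ideal :: "'a::ring_1 set \<Rightarrow> bool" where
  "left_ideal I \<longleftrightarrow> 0 \<in> I \<and> (\<forall>x\<in>I. \<forall>y\<in>I. x + y \<in> I) \<and> (\<forall>r. \<forall>x\<in>I. r * x \<in> I)"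

definition two_sided_ideal :: "'a::ring_1 set \<Rightarrow> bool" where
  "two_sided_ideal I \<longleftrightarrow> left_ideal I \<and> (\<forall>r. \<forall>x\<in>I. x * r \<in> I)"

definition maximal_left_ideal :: "'a::ring_1 set \<Rightarrow> bool" where
  "maximal_left_ideal M \<longleftrightarrow> left_ideal M \<and> M \<noteq> UNIV \<and>
     (\<forall>J. left_ideal J \<and> M \<subseteq> J \<longrightarrow> J = M \<or> J = UNIV)"

definition left_ideal_gen :: "'a::ring_1 set \<Rightarrow> 'a set" where
  "left_ideal_gen S = left_ideal hull S"

end

theory Submission
  imports Defs "HOL-Analysis.Continuum_Not_Denumerable"
    "HOL-Computational_Algebra.Fundamental_Theorem_Algebra"
begin

text \<open>Since M is two-sided and maximal as a left ideal, every element outside M is left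
  invertible modulo M, so \<open>u * v \<in> M\<close> and \<open>u \<notin> M\<close> give \<open>v \<in> M\<close>. Each variable x is
  central. Were x transcendental modulo M, the left inverses of the \<open>x - r\<close> (r real) would be
  uncountably many elements of a ring of countable real dimension, and a linear relation among
  them yields a nonzero real polynomial in x lying in M after all. Factoring it over the reals,
  one factor lies in M; an irreducible quadratic factor splits over the quaternions as
  \<open>(x - d) * (x - d')\<close> with d not real, and \<open>x - d \<in> M\<close> would force d to commute with all
  quaternions modulo M, impossible as nonzero constants are units. So \<open>t\<^sub>i - a\<^sub>i \<in> M\<close> for
  reals \<open>a\<^sub>i\<close>; modulo the left ideal they generate, every polynomial is congruent to its value
  at a, whence M equals that ideal.\<close>

lemma quat_of_real_add: "quat_of_real (a + b) = quat_of_real a + quat_of_real b"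
  by (simp add: quat_of_real_def plus_quat_def)

lemma quat_of_real_mult: "quat_of_real (a * b) = quat_of_real a * quat_of_real b"
  by (simp add: quat_of_real_def times_quat_def)

lemma quat_of_real_one [simp]: "quat_of_real 1 = 1"
  by (simp add: quat_of_real_def one_quat_def)

lemma quat_of_real_eq_0_iff [simp]: "quat_of_real a = 0 \<longleftrightarrow> a = 0"
  by (simp add: quat_of_real_def zero_quat_def)

lemma quat_of_real_commute: "quat_of_real a * q = q * quat_of_real a"
  by (simp add: quat_of_real_def times_quat_def)

lemma quat_left_inverse:
  assumes "(q :: quat) \<noteq> 0"
  obtains q' where "q' * q = 1"
proof -
  define n where "n = quat.Re q ^ 2 + Im1 q ^ 2 + Im2 q ^ 2 + Im3 q ^ 2"
  have "n \<noteq> 0"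
  proof
    assume "n = 0"
    then have "quat.Re q = 0 \<and> Im1 q = 0 \<and> Im2 q = 0 \<and> Im3 q = 0"
      unfolding n_def by (smt (verit) zero_le_power2 power2_eq_square mult_eq_0_iff)
    then have "q = 0" by (intro quat_eqI) (simp_all add: zero_quat_def)
    with assms show False by simp
  qed
  then have "Quat (quat.Re q / n) (- Im1 q / n) (- Im2 q / n) (- Im3 q / n) * q = 1"
    by (intro quat_eqI; simp add: times_quat_def one_quat_def field_simps; simp add: n_def power2_eq_square)
  then show thesis by (rule that)
qed

definition quat_basis :: "quat set" where
  "quat_basis = {1, Quat 0 1 0 0, Quat 0 0 1 0, Quat 0 0 0 1}"

lemma quat_expand:
  "q = quat_of_real (quat.Re q) * 1 + quat_of_real (Im1 q) * Quat 0 1 0 0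
     + quat_of_real (Im2 q) * Quat 0 0 1 0 + quat_of_real (Im3 q) * Quat 0 0 0 1"
  by (rule quat_eqI) (simp_all add: quat_of_real_def times_quat_def plus_quat_def one_quat_def)

lemma left_ideal_zero: "left_ideal I \<Longrightarrow> 0 \<in> I"
  by (simp add: left_ideal_def)

lemma left_ideal_add: "left_ideal I \<Longrightarrow> x \<in> I \<Longrightarrow> y \<in> I \<Longrightarrow> x + y \<in> I"
  by (simp add: left_ideal_def)

lemma left_ideal_mult_left: "left_ideal I \<Longrightarrow> x \<in> I \<Longrightarrow> r * x \<in> I"
  by (simp add: left_ideal_def)

lemma left_ideal_uminus: "left_ideal I \<Longrightarrow> x \<in> I \<Longrightarrow> - x \<in> I"
  using left_ideal_mult_left[of I x "- 1"] by simp

lemma left_ideal_diff: "left_ideal I \<Longrightarrow> x \<in> I \<Longrightarrow> y \<in> I \<Longrightarrow> x - y \<in> I"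
  using left_ideal_add[of I x "- y"] left_ideal_uminus[of I y] by simp

lemma left_ideal_sum: "left_ideal I \<Longrightarrow> (\<And>x. x \<in> A \<Longrightarrow> f x \<in> I) \<Longrightarrow> sum f A \<in> I"
  by (induction A rule: infinite_finite_induct) (auto simp: left_ideal_zero left_ideal_add)

lemma two_sided_ideal_mult_right: "two_sided_ideal I \<Longrightarrow> x \<in> I \<Longrightarrow> x * r \<in> I"
  by (simp add: two_sided_ideal_def)

lemma left_ideal_left_ideal_gen: "left_ideal (left_ideal_gen S)"
  unfolding left_ideal_gen_def by (rule hull_in) (auto simp: left_ideal_def)

lemma two_sided_ideal_commutator:
  assumes "two_sided_ideal I" and "\<And>y. x * y = y * x" and "x - c \<in> I"
  shows "e * c - c * e \<in> I"
proof -
  have "left_ideal I" using assms(1) by (simp add: two_sided_ideal_def)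
  have "(x - c) * e - e * (x - c) \<in> I"
    using two_sided_ideal_mult_right[OF assms(1,3)] left_ideal_mult_left[OF \<open>left_ideal I\<close> assms(3)]
    by (rule left_ideal_diff[OF \<open>left_ideal I\<close>])
  moreover have "(x - c) * e - e * (x - c) = e * c - c * e"
    by (simp add: algebra_simps assms(2))
  ultimately show ?thesis by simp
qed

locale left_maximal_ideal =
  fixes M :: "'a::ring_1 set"
  assumes two_sided: "two_sided_ideal M" and maximal: "maximal_left_ideal M"
begin

lemma left_ideal: "left_ideal M"
  using two_sided by (simp add: two_sided_ideal_def)

lemma one_not_mem: "1 \<notin> M"
  using left_ideal_mult_left[OF left_ideal, of 1] maximal
  by (auto simp: maximal_left_ideal_def)

lemma left_invertible_mod:
  assumes "p \<notin> M"
  obtains r where "r * p - 1 \<in> M"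
proof -
  define J where "J = {m + r * p | m r. m \<in> M}"
  have J_mem: "m + r * p \<in> J" if "m \<in> M" for m r
    using that unfolding J_def by blast
  have "left_ideal J"
    unfolding left_ideal_def
  proof safe
    show "0 \<in> J" using J_mem[of 0 0] left_ideal_zero[OF left_ideal] by simp
  next
    fix x y assume "x \<in> J" "y \<in> J"
    then obtain m r m' r' where "x = m + r * p" "y = m' + r' * p" "m \<in> M" "m' \<in> M"
      unfolding J_def by blast
    then show "x + y \<in> J"
      using J_mem[of "m + m'" "r + r'"] left_ideal_add[OF left_ideal] by (simp add: algebra_simps)
  next
    fix s x assume "x \<in> J"
    then obtain m r where "x = m + r * p" "m \<in> M"
      unfolding J_def by blast
    then show "s * x \<in> J"
      using J_mem[of "s * m" "s * r"] left_ideal_mult_left[OF left_ideal]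
      by (simp add: algebra_simps)
  qed
  moreover have "M \<subseteq> J" using J_mem[of _ 0] by auto
  moreover have "p \<in> J" using J_mem[of 0 1] left_ideal_zero[OF left_ideal] by simp
  ultimately have "J = UNIV" using maximal assms unfolding maximal_left_ideal_def by blast
  then obtain m r where "m \<in> M" "1 = m + r * p" unfolding J_def by blast
  then have "r * p - 1 = - m" by (simp add: algebra_simps)
  then show thesis using that left_ideal_uminus[OF left_ideal \<open>m \<in> M\<close>] by metis
qed

lemma mult_mem_cancel_left:
  assumes "u * v \<in> M" and "u \<notin> M"
  shows "v \<in> M"
proof -
  obtain r where r: "r * u - 1 \<in> M" using left_invertible_mod assms(2) by blast
  have "r * (u * v) - (r * u - 1) * v \<in> M"
    using left_ideal_mult_left[OF left_ideal assms(1)] two_sided_ideal_mult_right[OF two_sided r]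
    by (rule left_ideal_diff[OF left_ideal])
  then show ?thesis by (simp add: algebra_simps)
qed

end

lemma poly_mapping_sum_single:
  "(\<Sum>k\<in>Poly_Mapping.keys p. Poly_Mapping.single k (Poly_Mapping.lookup p k)) = p"
proof (rule poly_mapping_eqI)
  fix x
  show "Poly_Mapping.lookup (\<Sum>k\<in>Poly_Mapping.keys p. Poly_Mapping.single k (Poly_Mapping.lookup p k)) x
      = Poly_Mapping.lookup p x"
    by (cases "x \<in> Poly_Mapping.keys p")
      (auto simp: Poly_Mapping.lookup_sum lookup_single when_def in_keys_iff)
qed

lemma single_mult_commute:
  fixes p :: "'a::comm_monoid_add \<Rightarrow>\<^sub>0 'b::ring_1"
  assumes "\<And>d. c * d = d * c"
  shows "Poly_Mapping.single m c * p = p * Poly_Mapping.single m c"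
proof -
  have "Poly_Mapping.single m c * p
      = (\<Sum>k\<in>Poly_Mapping.keys p. Poly_Mapping.single m c * Poly_Mapping.single k (Poly_Mapping.lookup p k))"
    by (subst (1) poly_mapping_sum_single[symmetric]) (simp add: sum_distrib_left)
  also have "\<dots> = (\<Sum>k\<in>Poly_Mapping.keys p.
      Poly_Mapping.single k (Poly_Mapping.lookup p k) * Poly_Mapping.single m c)"
    by (simp add: mult_single assms add.commute)
  also have "\<dots> = p * Poly_Mapping.single m c"
    by (subst (3) poly_mapping_sum_single[symmetric]) (simp add: sum_distrib_right)
  finally show ?thesis .
qed

lemma qconst_add: "qconst (a + b) = qconst a + qconst b"
  by (simp add: qconst_def single_add)

lemma qconst_mult: "qconst (a * b) = qconst a * qconst b"
  by (simp add: qconst_def mult_single)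

lemma qconst_zero [simp]: "qconst 0 = 0"
  by (simp add: qconst_def)

lemma qconst_one [simp]: "qconst 1 = 1"
  by (simp add: qconst_def)

lemma qconst_sum: "qconst (sum f A) = (\<Sum>x\<in>A. qconst (f x))"
  by (induction A rule: infinite_finite_induct) (auto simp: qconst_add)

lemma qconst_mult_single: "qconst c * Poly_Mapping.single m d = Poly_Mapping.single m (c * d)"
  by (simp add: qconst_def mult_single)

lemma qvar_commute: "qvar i * p = p * qvar i"
  unfolding qvar_def by (rule single_mult_commute) simp

definition qreal :: "real \<Rightarrow> 'n qpoly" where
  "qreal r = qconst (quat_of_real r)"

lemma qreal_add: "qreal (a + b) = qreal a + qreal b"
  by (simp add: qreal_def qconst_add quat_of_real_add)

lemma qreal_mult: "qreal (a * b) = qreal a * qreal b"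
  by (simp add: qreal_def qconst_mult quat_of_real_mult)

lemma qreal_one [simp]: "qreal 1 = 1"
  by (simp add: qreal_def)

lemma qreal_zero [simp]: "qreal 0 = 0"
  using qreal_add[of 0 0] by simp

lemma qreal_diff: "qreal (a - b) = qreal a - qreal b"
  by (metis qreal_add diff_add_cancel add_diff_cancel_right')

lemma qreal_uminus: "qreal (- a) = - qreal a"
  using qreal_diff[of 0 a] by simp

lemma qreal_commute: "qreal r * p = p * qreal r"
  unfolding qreal_def qconst_def by (rule single_mult_commute) (rule quat_of_real_commute)

lemma qconst_not_mem:
  assumes "left_maximal_ideal M" and "c \<noteq> 0"
  shows "qconst c \<notin> M"
proof
  assume "qconst c \<in> M"
  obtain c' where "c' * c = 1" using quat_left_inverse assms(2) by blast
  then have "qconst c' * qconst c = 1" by (metis qconst_mult qconst_one)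
  with \<open>qconst c \<in> M\<close> have "1 \<in> M"
    by (metis left_ideal_mult_left left_maximal_ideal.left_ideal[OF assms(1)])
  with left_maximal_ideal.one_not_mem[OF assms(1)] show False by simp
qed

lemma qreal_not_mem: "left_maximal_ideal M \<Longrightarrow> r \<noteq> 0 \<Longrightarrow> qreal r \<notin> M"
  unfolding qreal_def by (rule qconst_not_mem) simp_all

definition real_poly_eval :: "real poly \<Rightarrow> 'n qpoly \<Rightarrow> 'n qpoly" where
  "real_poly_eval q x = fold_coeffs (\<lambda>a r. qreal a + x * r) q 0"

lemma real_poly_eval_0 [simp]: "real_poly_eval 0 x = 0"
  by (simp add: real_poly_eval_def)

lemma real_poly_eval_pCons [simp]: "real_poly_eval (pCons a p) x = qreal a + x * real_poly_eval p x"
  by (cases "p = 0 \<and> a = 0") (auto simp: real_poly_eval_def)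

lemma real_poly_eval_add [simp]: "real_poly_eval (p + q) x = real_poly_eval p x + real_poly_eval q x"
proof (induction p arbitrary: q)
  case (pCons a p)
  then show ?case by (cases q) (simp add: algebra_simps qreal_add)
qed simp

lemma real_poly_eval_smult [simp]: "real_poly_eval (smult c p) x = qreal c * real_poly_eval p x"
proof (induction p)
  case (pCons b p)
  then show ?case by (simp add: algebra_simps qreal_mult; metis qreal_commute mult.assoc)
qed simp

lemma real_poly_eval_sum: "real_poly_eval (sum f A) x = (\<Sum>a\<in>A. real_poly_eval (f a) x)"
  by (induction A rule: infinite_finite_induct) auto

lemma real_poly_eval_linear: "real_poly_eval [:- r, 1:] x = x - qreal r"
  by (simp add: qreal_uminus)

context
  fixes x :: "'n qpoly"
  assumes central: "\<And>y. x * y = y * x"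
begin

lemma real_poly_eval_mult: "real_poly_eval (p * q) x = real_poly_eval p x * real_poly_eval q x"
proof (induction p)
  case (pCons a p)
  then show ?case by (simp add: algebra_simps; metis central mult.assoc)
qed simp

lemma real_poly_eval_commute: "real_poly_eval p x * y = y * real_poly_eval p x"
proof (induction p)
  case (pCons a p)
  then show ?case by (simp add: algebra_simps qreal_commute; metis central mult.assoc)
qed simp

end

section \<open>Factoring modulo M\<close>

lemma map_poly_of_real_add:
  "map_poly (of_real :: real \<Rightarrow> 'a::real_algebra_1) (p + q) = map_poly of_real p + map_poly of_real q"
  by (rule poly_eqI) (simp add: coeff_map_poly)

lemma map_poly_of_real_mult:
  "map_poly (of_real :: real \<Rightarrow> 'a::{real_algebra_1, comm_ring_1}) (p * q)
     = map_poly of_real p * map_poly of_real q"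
  by (rule poly_eqI) (simp add: coeff_map_poly coeff_mult of_real_sum)

lemma poly_map_poly_of_real:
  "poly (map_poly of_real p) (of_real x :: 'a::{real_algebra_1, comm_ring_1}) = of_real (poly p x)"
  by (induction p) (auto simp: map_poly_pCons)

lemma real_poly_linear_or_quadratic_factor:
  fixes q :: "real poly"
  assumes "degree q > 0"
  obtains a s where "q = [:- a, 1:] * s"
  | \<alpha> \<beta> s where "\<beta> \<noteq> 0" "q = [:\<alpha>\<^sup>2 + \<beta>\<^sup>2, - 2 * \<alpha>, 1:] * s"
proof -
  let ?c = "map_poly (of_real :: real \<Rightarrow> complex)"
  have "degree (?c q) = degree q" by (rule degree_map_poly) simp
  then have "\<not> constant (poly (?c q))" using assms by (subst constant_degree) simp
  then obtain z where z: "poly (?c q) z = 0" using fundamental_theorem_of_algebra by blast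
  show thesis
  proof (cases "Im z = 0")
    case True
    then have "z = of_real (Complex.Re z)" by (simp add: complex_eq_iff)
    then have "of_real (poly q (Complex.Re z)) = (0 :: complex)"
      using z poly_map_poly_of_real[of q "Complex.Re z"] by metis
    then have "poly q (Complex.Re z) = 0" by simp
    then show thesis using that(1) by (metis dvdE poly_eq_0_iff_dvd)
  next
    case False
    define \<alpha> \<beta> where "\<alpha> = Complex.Re z" and "\<beta> = Im z"
    define Q where "Q = [:\<alpha>\<^sup>2 + \<beta>\<^sup>2, - 2 * \<alpha>, 1:]"
    have "Q \<noteq> 0" "degree Q = 2" by (simp_all add: Q_def)
    have "poly (?c Q) z = 0"
      by (simp add: Q_def \<alpha>_def \<beta>_def map_poly_pCons complex_eq_iff power2_eq_square algebra_simps)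
    define r where "r = q mod Q"
    have "?c q = ?c Q * ?c (q div Q) + ?c r"
      unfolding r_def by (simp flip: map_poly_of_real_mult map_poly_of_real_add)
    then have "poly (?c r) z = 0" using z \<open>poly (?c Q) z = 0\<close> by simp
    have "r = 0 \<or> degree r < degree Q"
      unfolding r_def by (rule degree_mod_less[OF \<open>Q \<noteq> 0\<close>])
    then have "degree r \<le> 1" using \<open>degree Q = 2\<close> by auto
    then have "r = [:coeff r 0, coeff r 1:]"
      by (intro poly_eqI) (auto simp: coeff_pCons coeff_eq_0 split: nat.split)
    then obtain c\<^sub>0 c\<^sub>1 where r: "r = [:c\<^sub>0, c\<^sub>1:]" by blast
    with \<open>poly (?c r) z = 0\<close> have "of_real c\<^sub>0 + z * of_real c\<^sub>1 = 0"
      by (simp add: map_poly_pCons)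
    then have "r = 0" using False r by (auto simp: complex_eq_iff)
    then have "q = Q * (q div Q)" using mult_div_mod_eq[of Q q] by (simp add: r_def)
    then show thesis using that(2) False by (simp add: Q_def \<beta>_def)
  qed
qed

lemma quadratic_eval_not_mem:
  fixes M :: "'n qpoly set"
  assumes M: "left_maximal_ideal M" and central: "\<And>y. x * y = y * x" and "\<beta> \<noteq> 0"
  shows "real_poly_eval [:\<alpha>\<^sup>2 + \<beta>\<^sup>2, - 2 * \<alpha>, 1:] x \<notin> M"
proof
  assume "real_poly_eval [:\<alpha>\<^sup>2 + \<beta>\<^sup>2, - 2 * \<alpha>, 1:] x \<in> M"
  \<comment> \<open>the complex roots \<open>\<alpha> \<plusminus> \<beta>i\<close>, which do not commute with j\<close>
  define d where "d = Quat \<alpha> \<beta> 0 0"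
  define d' where "d' = Quat \<alpha> (- \<beta>) 0 0"
  have "d + d' = quat_of_real (2 * \<alpha>)" "d * d' = quat_of_real (\<alpha>\<^sup>2 + \<beta>\<^sup>2)"
    by (simp_all add: d_def d'_def plus_quat_def times_quat_def quat_of_real_def power2_eq_square)
  then have sum_prod:
    "qconst d + qconst d' = qreal (2 * \<alpha>)" "qconst d * qconst d' = qreal (\<alpha>\<^sup>2 + \<beta>\<^sup>2)"
    by (simp_all add: qreal_def flip: qconst_add qconst_mult)
  have "(x - qconst d) * (x - qconst d') = x * x - x * (qconst d + qconst d') + qconst d * qconst d'"
    by (simp add: algebra_simps central[of "qconst d"])
  also have "\<dots> = real_poly_eval [:\<alpha>\<^sup>2 + \<beta>\<^sup>2, - 2 * \<alpha>, 1:] x"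
    unfolding sum_prod by (simp add: algebra_simps qreal_uminus)
  finally have "(x - qconst d) * (x - qconst d') \<in> M"
    using \<open>real_poly_eval _ x \<in> M\<close> by simp
  then have "x - qconst d \<in> M \<or> x - qconst d' \<in> M"
    using left_maximal_ideal.mult_mem_cancel_left[OF M] by metis
  then obtain \<delta> where "x - qconst \<delta> \<in> M" "\<delta> \<in> {d, d'}" by blast
  define j where "j = Quat 0 0 1 0"
  have "qconst j * qconst \<delta> - qconst \<delta> * qconst j \<in> M"
    using left_maximal_ideal.two_sided[OF M] central \<open>x - qconst \<delta> \<in> M\<close>
    by (rule two_sided_ideal_commutator)
  moreover have "qconst j * qconst \<delta> - qconst \<delta> * qconst j = qconst (j * \<delta> - \<delta> * j)"
    by (simp add: qconst_def single_diff mult_single)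
  moreover have "j * \<delta> - \<delta> * j \<noteq> 0"
    using \<open>\<delta> \<in> {d, d'}\<close> \<open>\<beta> \<noteq> 0\<close>
    by (auto simp: j_def d_def d'_def times_quat_def minus_quat_def zero_quat_def)
  ultimately show False using qconst_not_mem[OF M] by metis
qed

lemma real_poly_eval_mem_imp_linear_mem:
  fixes M :: "'n qpoly set"
  assumes M: "left_maximal_ideal M" and central: "\<And>y. x * y = y * x"
  shows "q \<noteq> 0 \<Longrightarrow> real_poly_eval q x \<in> M \<Longrightarrow> \<exists>a. x - qreal a \<in> M"
proof (induction "degree q" arbitrary: q rule: less_induct)
  case less
  show ?case
  proof (cases "degree q = 0")
    case True
    then obtain c where "q = [:c:]" by (metis degree_eq_zeroE)
    with less.prems show ?thesis using qreal_not_mem[OF M] by auto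
  next
    case False
    have factor_mem: "real_poly_eval f x \<in> M \<or> (\<exists>a. x - qreal a \<in> M)"
      if "q = f * s" "degree f > 0" for f s
    proof (cases "real_poly_eval f x \<in> M")
      case False
      have "s \<noteq> 0" "f \<noteq> 0" using that less.prems(1) by auto
      then have "degree s < degree q" using that by (simp add: degree_mult_eq)
      have "real_poly_eval q x = real_poly_eval s x * real_poly_eval f x"
        unfolding \<open>q = f * s\<close> real_poly_eval_mult[OF central] by (rule real_poly_eval_commute[OF central])
      then have "real_poly_eval s x \<in> M"
        using less.prems(2) False left_maximal_ideal.mult_mem_cancel_left[OF M] by metis
      then show ?thesis using less.hyps[OF \<open>degree s < degree q\<close> \<open>s \<noteq> 0\<close>] by blast
    qed simp
    show ?thesis
    proof (rule real_poly_linear_or_quadratic_factor[of q])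
      show "degree q > 0" using False by simp
    next
      fix a s assume "q = [:- a, 1:] * s"
      from factor_mem[OF this] show ?thesis unfolding real_poly_eval_linear by auto
    next
      fix \<alpha> \<beta> s assume "\<beta> \<noteq> 0" "q = [:\<alpha>\<^sup>2 + \<beta>\<^sup>2, - 2 * \<alpha>, 1:] * s"
      from factor_mem[OF this(2)] show ?thesis
        using quadratic_eval_not_mem[OF M central \<open>\<beta> \<noteq> 0\<close>] by auto
    qed
  qed
qed

section \<open>Algebraicity modulo M\<close>

interpretation qpoly_real: vector_space "\<lambda>c (p :: 'n qpoly). qreal c * p"
  by unfold_locales (simp_all add: algebra_simps qreal_add qreal_mult)

lemma countable_UNIV_poly_mapping:
  "countable (UNIV :: ('a::finite \<Rightarrow>\<^sub>0 'b::{zero, countable}) set)"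
proof (rule countable_image_inj_on)
  show "countable (range (Poly_Mapping.lookup :: ('a \<Rightarrow>\<^sub>0 'b) \<Rightarrow> _))" by simp
  show "inj_on (Poly_Mapping.lookup :: ('a \<Rightarrow>\<^sub>0 'b) \<Rightarrow> _) UNIV" by (meson injI poly_mapping_eq_iff)
qed

lemma infinite_fibre_keys_subset:
  fixes u :: "real \<Rightarrow> 'k \<Rightarrow>\<^sub>0 'b::zero"
  assumes "countable (UNIV :: 'k set)"
  shows "\<exists>K. finite K \<and> infinite {r. Poly_Mapping.keys (u r) \<subseteq> K}"
proof (rule ccontr)
  let ?fibre = "\<lambda>K. {r. Poly_Mapping.keys (u r) \<subseteq> K}"
  let ?Fin = "{K :: 'k set. finite K \<and> K \<subseteq> UNIV}"
  assume "\<nexists>K. finite K \<and> infinite (?fibre K)"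
  then have "countable (?fibre K)" if "K \<in> ?Fin" for K
    using that countable_finite by blast
  then have "countable (\<Union>K\<in>?Fin. ?fibre K)"
    using countable_Collect_finite_subset[OF assms] by (intro countable_UN)
  moreover have "r \<in> (\<Union>K\<in>?Fin. ?fibre K)" for r
    by (rule UN_I[of "Poly_Mapping.keys (u r)"]) simp_all
  then have "UNIV \<subseteq> (\<Union>K\<in>?Fin. ?fibre K)" by blast
  ultimately show False using countable_subset uncountable_UNIV_real by metis
qed

lemma qpoly_in_span_single_basis:
  fixes p :: "'n qpoly"
  assumes "Poly_Mapping.keys p \<subseteq> K"
  shows "p \<in> qpoly_real.span ((\<lambda>(m, e). Poly_Mapping.single m e) ` (K \<times> quat_basis))"
    (is "_ \<in> qpoly_real.span ?W")
proof -
  have "Poly_Mapping.single k c \<in> qpoly_real.span ?W" if "k \<in> K" for k c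
  proof -
    have basis: "Poly_Mapping.single k e \<in> qpoly_real.span ?W" if "e \<in> quat_basis" for e
      by (rule qpoly_real.span_base) (use \<open>k \<in> K\<close> that in auto)
    have "Poly_Mapping.single k c = Poly_Mapping.single k (quat_of_real (quat.Re c) * 1
        + quat_of_real (Im1 c) * Quat 0 1 0 0 + quat_of_real (Im2 c) * Quat 0 0 1 0
        + quat_of_real (Im3 c) * Quat 0 0 0 1)"
      by (rule arg_cong[OF quat_expand])
    also have "\<dots> = qreal (quat.Re c) * Poly_Mapping.single k 1
        + qreal (Im1 c) * Poly_Mapping.single k (Quat 0 1 0 0)
        + qreal (Im2 c) * Poly_Mapping.single k (Quat 0 0 1 0)
        + qreal (Im3 c) * Poly_Mapping.single k (Quat 0 0 0 1)"
      by (simp add: qreal_def qconst_mult_single single_add)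
    also have "\<dots> \<in> qpoly_real.span ?W"
      using basis[of 1] basis[of "Quat 0 1 0 0"] basis[of "Quat 0 0 1 0"] basis[of "Quat 0 0 0 1"]
      by (simp add: quat_basis_def qpoly_real.span_add qpoly_real.span_scale)
    finally show ?thesis .
  qed
  then have "(\<Sum>k\<in>Poly_Mapping.keys p. Poly_Mapping.single k (Poly_Mapping.lookup p k))
      \<in> qpoly_real.span ?W"
    using assms by (intro qpoly_real.span_sum) auto
  then show ?thesis by (simp add: poly_mapping_sum_single)
qed

lemma qpoly_real_linear_dependence:
  fixes u :: "real \<Rightarrow> ('n::finite) qpoly"
  obtains T c r\<^sub>0 where "finite T" "r\<^sub>0 \<in> T" "c r\<^sub>0 \<noteq> 0" "(\<Sum>r\<in>T. qreal (c r) * u r) = 0"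
proof -
  obtain K where "finite K" and infinite: "infinite {r. Poly_Mapping.keys (u r) \<subseteq> K}"
    using infinite_fibre_keys_subset[OF countable_UNIV_poly_mapping] by blast
  define W :: "'n qpoly set" where "W = (\<lambda>(m, e). Poly_Mapping.single m e) ` (K \<times> quat_basis)"
  have "finite W" using \<open>finite K\<close> by (simp add: W_def quat_basis_def)
  obtain T where T: "finite T" "card T = Suc (card W)" "T \<subseteq> {r. Poly_Mapping.keys (u r) \<subseteq> K}"
    using infinite_arbitrarily_large[OF infinite] by blast
  show thesis
  proof (cases "inj_on u T")
    case True
    have "u r \<in> qpoly_real.span W" if "r \<in> T" for r
      unfolding W_def by (rule qpoly_in_span_single_basis) (use T(3) that in blast)
    then have "u ` T \<subseteq> qpoly_real.span W" by blast
    moreover have "card (u ` T) = Suc (card W)" using True T(2) by (simp add: card_image)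
    ultimately have "qpoly_real.dependent (u ` T)"
      using qpoly_real.independent_span_bound[OF \<open>finite W\<close>] by force
    then obtain d where d: "\<exists>v\<in>u ` T. d v \<noteq> 0" "(\<Sum>v\<in>u ` T. qreal (d v) * v) = 0"
      unfolding qpoly_real.dependent_finite[OF finite_imageI[OF T(1)]] by blast
    from d(1) obtain r\<^sub>0 where "r\<^sub>0 \<in> T" "d (u r\<^sub>0) \<noteq> 0" by blast
    moreover have "(\<Sum>r\<in>T. qreal (d (u r)) * u r) = 0"
      using d(2) by (simp add: sum.reindex[OF True])
    ultimately show thesis using that[of T r\<^sub>0 "d \<circ> u"] T(1) by simp
  next
    case False
    then obtain r s where "r \<noteq> s" "u r = u s" by (auto simp: inj_on_def)
    then have "(\<Sum>t\<in>{r, s}. qreal (if t = r then 1 else - 1) * u t) = 0"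
      by (simp add: qreal_uminus)
    then show thesis using that[of "{r, s}" r "\<lambda>t. if t = r then 1 else - 1"] by simp
  qed
qed

lemma sum_smult_prod_linear_nonzero:
  fixes c :: "'a \<Rightarrow> 'a::idom"
  assumes "finite T" "r\<^sub>0 \<in> T" "c r\<^sub>0 \<noteq> 0"
  shows "(\<Sum>r\<in>T. smult (c r) (\<Prod>s\<in>T - {r}. [:- s, 1:])) \<noteq> 0"
proof -
  have vanish: "(\<Prod>s\<in>T - {r}. r\<^sub>0 - s) = 0" if "r \<in> T - {r\<^sub>0}" for r
    using that assms(1,2) by (intro prod_zero) auto
  have "poly (\<Sum>r\<in>T. smult (c r) (\<Prod>s\<in>T - {r}. [:- s, 1:])) r\<^sub>0
      = (\<Sum>r\<in>T. c r * (\<Prod>s\<in>T - {r}. r\<^sub>0 - s))"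
    by (simp add: poly_sum poly_prod)
  also have "\<dots> = c r\<^sub>0 * (\<Prod>s\<in>T - {r\<^sub>0}. r\<^sub>0 - s)"
    using vanish by (simp add: sum.remove[OF assms(1,2)])
  also have "\<dots> \<noteq> 0" using assms(1,3) by simp
  finally show ?thesis by auto
qed

lemma central_algebraic_mod:
  fixes M :: "('n::finite) qpoly set"
  assumes M: "left_maximal_ideal M" and central: "\<And>y. x * y = y * x"
  shows "\<exists>q. q \<noteq> 0 \<and> real_poly_eval q x \<in> M"
proof (rule ccontr)
  assume none: "\<nexists>q. q \<noteq> 0 \<and> real_poly_eval q x \<in> M"
  interpret left_maximal_ideal M by (fact M)
  have not_mem: "x - qreal r \<notin> M" for r
  proof
    assume "x - qreal r \<in> M"
    then have "real_poly_eval [:- r, 1:] x \<in> M" by (simp only: real_poly_eval_linear)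
    with none show False by (metis pCons_eq_0_iff zero_neq_one)
  qed
  have "\<exists>v. v * (x - qreal r) - 1 \<in> M" for r
    using left_invertible_mod[OF not_mem] by blast
  then obtain u where u: "\<And>r. u r * (x - qreal r) - 1 \<in> M" by metis
  obtain T r\<^sub>0 c where T: "finite T" "r\<^sub>0 \<in> T" "c r\<^sub>0 \<noteq> 0"
    and relation: "(\<Sum>r\<in>T. qreal (c r) * u r) = 0"
    by (rule qpoly_real_linear_dependence)
  \<comment> \<open>\<open>u r\<close> inverts \<open>x - r\<close> modulo M, so multiplying the relation by \<open>\<Prod>s\<in>T. x - s\<close>
    clears the denominators\<close>
  define P where "P r = (\<Prod>s\<in>T - {r}. [:- s, 1:])" for r
  define Q where "Q = (\<Sum>r\<in>T. smult (c r) (P r))"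
  define E where "E = real_poly_eval (\<Prod>s\<in>T. [:- s, 1:]) x"
  have "Q \<noteq> 0" unfolding Q_def P_def by (rule sum_smult_prod_linear_nonzero[of T r\<^sub>0 c, OF T])
  have "u r * E - real_poly_eval (P r) x \<in> M" if "r \<in> T" for r
  proof -
    have E_factor: "E = (x - qreal r) * real_poly_eval (P r) x"
      unfolding E_def P_def prod.remove[OF T(1) that]
      by (simp only: real_poly_eval_mult[OF central] real_poly_eval_linear)
    have "u r * E - real_poly_eval (P r) x = (u r * (x - qreal r) - 1) * real_poly_eval (P r) x"
      unfolding E_factor by (simp add: algebra_simps)
    then show ?thesis using u two_sided_ideal_mult_right[OF two_sided] by metis
  qed
  then have "(\<Sum>r\<in>T. qreal (c r) * (u r * E - real_poly_eval (P r) x)) \<in> M"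
    by (intro left_ideal_sum[OF left_ideal] left_ideal_mult_left[OF left_ideal])
  moreover have "(\<Sum>r\<in>T. qreal (c r) * (u r * E - real_poly_eval (P r) x))
      = (\<Sum>r\<in>T. qreal (c r) * u r) * E - real_poly_eval Q x"
    by (simp add: Q_def real_poly_eval_sum right_diff_distrib sum_subtractf sum_distrib_right mult.assoc)
  ultimately have "real_poly_eval Q x \<in> M"
    using relation left_ideal_uminus[OF left_ideal] by fastforce
  with \<open>Q \<noteq> 0\<close> none show False by blast
qed

lemma central_congruent_real:
  fixes M :: "('n::finite) qpoly set"
  assumes M: "left_maximal_ideal M" and central: "\<And>y. x * y = y * x"
  shows "\<exists>a. x - qreal a \<in> M"
proof -
  obtain q where "q \<noteq> 0" "real_poly_eval q x \<in> M"
    using central_algebraic_mod[OF M central] by blast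
  then show ?thesis by (rule real_poly_eval_mem_imp_linear_mem[OF M central])
qed

section \<open>Ideals of points\<close>

lemma monomial_induct [case_names zero add_var]:
  fixes m :: "'n::finite \<Rightarrow>\<^sub>0 nat"
  assumes "P 0" and "\<And>m i. P m \<Longrightarrow> P (m + Poly_Mapping.single i 1)"
  shows "P m"
proof (induction "\<Sum>i\<in>UNIV. Poly_Mapping.lookup m i" arbitrary: m rule: less_induct)
  case less
  show ?case
  proof (cases "m = 0")
    case False
    then obtain i where "Poly_Mapping.lookup m i > 0"
      by (metis gr0I lookup_zero poly_mapping_eqI)
    define m' where "m' = m - Poly_Mapping.single i 1"
    have lookup_m: "Poly_Mapping.lookup m j = Poly_Mapping.lookup m' j + (if j = i then 1 else 0)" for j
      using \<open>Poly_Mapping.lookup m i > 0\<close> by (simp add: m'_def lookup_minus lookup_single when_def)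
    then have "m = m' + Poly_Mapping.single i 1"
      by (intro poly_mapping_eqI) (simp add: lookup_add lookup_single when_def)
    moreover have "(\<Sum>j\<in>UNIV. Poly_Mapping.lookup m' j) < (\<Sum>j\<in>UNIV. Poly_Mapping.lookup m j)"
      by (simp add: lookup_m sum.distrib)
    ultimately show ?thesis using less assms(2) by metis
  qed (simp add: assms(1))
qed

definition point_ideal :: "('n \<Rightarrow> real) \<Rightarrow> 'n qpoly set" where
  "point_ideal a = left_ideal_gen (range (\<lambda>i. qvar i - qreal (a i)))"

definition qpoly_eval :: "('n::finite \<Rightarrow> real) \<Rightarrow> 'n qpoly \<Rightarrow> quat" where
  "qpoly_eval a p = (\<Sum>m\<in>Poly_Mapping.keys p.
     Poly_Mapping.lookup p m * quat_of_real (\<Prod>i\<in>UNIV. a i ^ Poly_Mapping.lookup m i))"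

lemma monomial_sub_eval_mem:
  fixes a :: "'n::finite \<Rightarrow> real"
  shows "Poly_Mapping.single m 1 - qreal (\<Prod>i\<in>UNIV. a i ^ Poly_Mapping.lookup m i) \<in> point_ideal a"
proof (induction m rule: monomial_induct)
  case zero
  then show ?case by (simp add: point_ideal_def left_ideal_zero[OF left_ideal_left_ideal_gen])
next
  case (add_var m i)
  define A where "A = (\<Prod>j\<in>UNIV. a j ^ Poly_Mapping.lookup m j)"
  have "(\<Prod>j\<in>UNIV. a j ^ Poly_Mapping.lookup (m + Poly_Mapping.single i 1) j)
      = (\<Prod>j\<in>UNIV. a j ^ Poly_Mapping.lookup m j * (if j = i then a j else 1))"
    by (rule prod.cong) (simp_all add: lookup_add lookup_single when_def power_add)
  also have "\<dots> = A * a i" by (simp add: prod.distrib A_def)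
  finally have "Poly_Mapping.single (m + Poly_Mapping.single i 1) 1
      - qreal (\<Prod>j\<in>UNIV. a j ^ Poly_Mapping.lookup (m + Poly_Mapping.single i 1) j)
      = Poly_Mapping.single m 1 * qvar i - qreal A * qreal (a i)"
    by (simp add: qvar_def mult_single qreal_mult)
  also have "\<dots> = Poly_Mapping.single m 1 * (qvar i - qreal (a i))
      + qreal (a i) * (Poly_Mapping.single m 1 - qreal A)"
    by (simp add: algebra_simps qreal_commute[of "a i" "Poly_Mapping.single m 1"]
        qreal_commute[of "a i" "qreal A"])
  also have "\<dots> \<in> point_ideal a"
  proof -
    have "qvar i - qreal (a i) \<in> point_ideal a"
      unfolding point_ideal_def left_ideal_gen_def by (rule hull_inc) simp
    then show ?thesis
      using add_var[folded A_def] left_ideal_left_ideal_gen[of "range (\<lambda>i. qvar i - qreal (a i))"]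
      unfolding point_ideal_def by (intro left_ideal_add left_ideal_mult_left)
  qed
  finally show ?case .
qed

lemma qpoly_sub_eval_mem:
  fixes a :: "'n::finite \<Rightarrow> real"
  shows "p - qconst (qpoly_eval a p) \<in> point_ideal a"
proof -
  define A where "A m = (\<Prod>i\<in>UNIV. a i ^ Poly_Mapping.lookup m i)" for m :: "'n \<Rightarrow>\<^sub>0 nat"
  have "p - qconst (qpoly_eval a p)
      = (\<Sum>m\<in>Poly_Mapping.keys p. qconst (Poly_Mapping.lookup p m) * (Poly_Mapping.single m 1 - qreal (A m)))"
  proof -
    have "p = (\<Sum>m\<in>Poly_Mapping.keys p. qconst (Poly_Mapping.lookup p m) * Poly_Mapping.single m 1)"
      by (simp add: qconst_mult_single poly_mapping_sum_single)
    moreover have "qconst (qpoly_eval a p)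
        = (\<Sum>m\<in>Poly_Mapping.keys p. qconst (Poly_Mapping.lookup p m) * qreal (A m))"
      by (simp add: qpoly_eval_def A_def qreal_def qconst_sum qconst_mult)
    ultimately show ?thesis by (simp add: right_diff_distrib sum_subtractf)
  qed
  also have "\<dots> \<in> point_ideal a"
    using monomial_sub_eval_mem[of _ a] left_ideal_left_ideal_gen
    unfolding A_def point_ideal_def
    by (intro left_ideal_sum left_ideal_mult_left)
  finally show ?thesis .
qed

lemma left_maximal_ideal_eq_point_ideal:
  fixes M :: "('n::finite) qpoly set"
  assumes M: "left_maximal_ideal M" and a: "\<And>i. qvar i - qreal (a i) \<in> M"
  shows "M = point_ideal a"
proof
  interpret left_maximal_ideal M by (fact M)
  show "point_ideal a \<subseteq> M"
    unfolding point_ideal_def left_ideal_gen_def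
    by (rule hull_minimal) (use a left_ideal in auto)
  show "M \<subseteq> point_ideal a"
  proof
    fix p assume "p \<in> M"
    have "p - qconst (qpoly_eval a p) \<in> M"
      using qpoly_sub_eval_mem \<open>point_ideal a \<subseteq> M\<close> by blast
    then have "qconst (qpoly_eval a p) \<in> M"
      using left_ideal_diff[OF left_ideal \<open>p \<in> M\<close>] by fastforce
    then have "qpoly_eval a p = 0" using qconst_not_mem[OF M] by blast
    then show "p \<in> point_ideal a" using qpoly_sub_eval_mem[of p a] by simp
  qed
qed

theorem proposition4p7:
  fixes M :: "('n::finite) qpoly set"
  assumes "two_sided_ideal M"
    and "maximal_left_ideal M"
  shows "\<exists>a :: 'n \<Rightarrow> real.
           M = left_ideal_gen (range (\<lambda>i. qvar i - qconst (quat_of_real (a i))))"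
proof -
  have M: "left_maximal_ideal M" by (intro left_maximal_ideal.intro assms)
  have "\<exists>b. qvar i - qreal b \<in> M" for i
    by (rule central_congruent_real[OF M qvar_commute])
  then obtain a where "\<And>i. qvar i - qreal (a i) \<in> M" by metis
  then have "M = point_ideal a" by (rule left_maximal_ideal_eq_point_ideal[OF M])
  then show ?thesis by (auto simp: point_ideal_def qreal_def)
qed

end
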